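(* Consider two words $ubav$ and $uabv$ with $a,b \in A$. Let $(x_\ell,y_\ell)$ denote the attribute of position $\ell$ in $ubav$, and let $(x'_\ell,y'_\ell)$ denote the attribute of position $\ell$ in $uabv$. Suppose that $|ub| = i$ and that the attributes $(x_i,y_i)$ and $(x_{i+1},y_{i+1})$ satisfy $x_i = x_{i+1}$. Then all positions $\ell$ satisfy $x'_\ell = x_\ell$.
   Context: $A$ is a finite alphabet. An $\mathsf{X}$-ranker is a nonempty word over $\{\mathsf{X}_a : a\in A\}$ ("go to the next $a$-position", starting with the first $a$-position) and a $\mathsf{Y}$-ranker a nonempty word over $\{\mathsf{Y}_a : a\in A\}$ ("go to the previous $a$-position", starting with the last $a$-position). The attribute of position $\ell$ of a word is $(x_\ell,y_\ell)$, where $x_\ell$ (resp. $y_\ell$) is the length of a shortest $\mathsf{X}$-ranker (resp. $\mathsf{Y}$-ranker) reaching $\ell$. *)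

theory Defs
  imports Main
begin

text \<open>Words are lists; positions are 1-based: position q of w carries letter w ! (q-1).
  A ranker is a list of letters.  An X-ranker starts before the word (position 0),
  each X_a moves to the next a-position strictly to the right.  A Y-ranker starts after the
  word (position length w + 1), each Y_a moves to the previous a-position strictly to the left.\<close>

definition nextpos :: "'a list \<Rightarrow> 'a \<Rightarrow> nat \<Rightarrow> nat option" where
  "nextpos w a p =
     (if \<exists>q. p < q \<and> q \<le> length w \<and> w ! (q - 1) = a
      then Some (LEAST q. p < q \<and> q \<le> length w \<and> w ! (q - 1) = a) else None)"

definition prevpos :: "'a list \<Rightarrow> 'a \<Rightarrow> nat \<Rightarrow> nat option" where
  "prevpos w a p =
     (if \<exists>q. 1 \<le> q \<and> q < p \<and> q \<le> length w \<and> w ! (q - 1) = a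
      then Some (GREATEST q. 1 \<le> q \<and> q < p \<and> q \<le> length w \<and> w ! (q - 1) = a) else None)"

fun xrun :: "'a list \<Rightarrow> 'a list \<Rightarrow> nat \<Rightarrow> nat option" where
  "xrun w [] p = Some p"
| "xrun w (c # r) p = (case nextpos w c p of None \<Rightarrow> None | Some q \<Rightarrow> xrun w r q)"

fun yrun :: "'a list \<Rightarrow> 'a list \<Rightarrow> nat \<Rightarrow> nat option" where
  "yrun w [] p = Some p"
| "yrun w (c # r) p = (case prevpos w c p of None \<Rightarrow> None | Some q \<Rightarrow> yrun w r q)"

definition xranker_pos :: "'a list \<Rightarrow> 'a list \<Rightarrow> nat option" where
  "xranker_pos w r = (if r = [] then None else xrun w r 0)"

definition yranker_pos :: "'a list \<Rightarrow> 'a list \<Rightarrow> nat option" where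
  "yranker_pos w r = (if r = [] then None else yrun w r (length w + 1))"

definition xattr :: "'a list \<Rightarrow> nat \<Rightarrow> nat" where
  "xattr w l = (LEAST n. \<exists>r. length r = n \<and> xranker_pos w r = Some l)"

definition yattr :: "'a list \<Rightarrow> nat \<Rightarrow> nat" where
  "yattr w l = (LEAST n. \<exists>r. length r = n \<and> yranker_pos w r = Some l)"

definition attr :: "'a list \<Rightarrow> nat \<Rightarrow> nat \<times> nat" where
  "attr w l = (xattr w l, yattr w l)"

end

theory Submission
  imports Defs
begin

(* The X-attribute obeys x_0 = 0 and x_l = 1 + min x_p, the minimum over those p < l from which
   X_c, with c the letter at l, lands on l, i.e. c does not occur strictly between p and l.
   Compare ubav with uabv, where i = |ub|.  On u nothing changes.  The b now at i + 1 can use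
   every predecessor of the old b at i, since a <> b.  The a now at i can use every predecessor
   of the old a at i + 1 except i itself, and the tie x_i = x_(i+1) says that i is not optimal.
   Beyond i + 1 every jump survives, a jump from i being replaced by one from i + 1, whose value
   is no larger by the tie.  So x' <= x everywhere by induction; the tie then carries over to
   uabv, and the symmetric argument gives x <= x'. *)

lemma Least_eq_iff:
  fixes P :: "'a::wellorder \<Rightarrow> bool"
  shows "(\<exists>x. P x) \<and> (LEAST x. P x) = l \<longleftrightarrow> P l \<and> (\<forall>x. P x \<longrightarrow> l \<le> x)"
  by (metis LeastI Least_equality Least_le)

lemma nextpos_eq_Some_iff:
  "nextpos w c p = Some l \<longleftrightarrow>
    p < l \<and> l \<le> length w \<and> w ! (l - 1) = c \<and> (\<forall>q. p < q \<and> q < l \<longrightarrow> w ! (q - 1) \<noteq> c)"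
proof -
  let ?P = "\<lambda>q. p < q \<and> q \<le> length w \<and> w ! (q - 1) = c"
  have "nextpos w c p = Some l \<longleftrightarrow> (\<exists>q. ?P q) \<and> (LEAST q. ?P q) = l"
    by (simp add: nextpos_def)
  also have "\<dots> \<longleftrightarrow> ?P l \<and> (\<forall>q. ?P q \<longrightarrow> l \<le> q)"
    by (rule Least_eq_iff)
  also have "\<dots> \<longleftrightarrow>
      p < l \<and> l \<le> length w \<and> w ! (l - 1) = c \<and> (\<forall>q. p < q \<and> q < l \<longrightarrow> w ! (q - 1) \<noteq> c)"
    using not_le by fastforce
  finally show ?thesis .
qed

lemma nextpos_append:
  assumes "l \<le> length u"
  shows "nextpos (u @ v) c p = Some l \<longleftrightarrow> nextpos u c p = Some l"
proof -
  have "(u @ v) ! (q - 1) = u ! (q - 1)" if "0 < q" "q \<le> l" for q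
  proof -
    have "q - 1 < length u" using that assms by simp
    then show ?thesis by (simp add: nth_append)
  qed
  then show ?thesis using assms by (auto simp: nextpos_eq_Some_iff)
qed

lemma xrun_Cons_eq_Some_iff:
  "xrun w (c # r) p = Some q \<longleftrightarrow> (\<exists>l. nextpos w c p = Some l \<and> xrun w r l = Some q)"
  by (simp split: option.split)

lemma xrun_append_single:
  "xrun w (r @ [c]) p = (case xrun w r p of None \<Rightarrow> None | Some q \<Rightarrow> nextpos w c q)"
  by (induction r arbitrary: p) (auto split: option.splits)

lemma xrun_Some_le: "xrun w r p = Some q \<Longrightarrow> p \<le> q"
proof (induction r arbitrary: p)
  case (Cons c r)
  then obtain l where l: "nextpos w c p = Some l" "xrun w r l = Some q"
    unfolding xrun_Cons_eq_Some_iff by blast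
  have "p < l" using l(1) by (simp add: nextpos_eq_Some_iff)
  with Cons.IH[OF l(2)] show ?case by simp
qed simp

lemma xrun_append_Some_iff:
  "q \<le> length u \<Longrightarrow> xrun (u @ v) r p = Some q \<longleftrightarrow> xrun u r p = Some q"
proof (induction r arbitrary: p)
  case (Cons c r)
  have step: "nextpos (u @ v) c p = Some l \<and> xrun (u @ v) r l = Some q \<longleftrightarrow>
        nextpos u c p = Some l \<and> xrun u r l = Some q" for l
  proof (cases "l \<le> q")
    case True
    then have "l \<le> length u" using Cons.prems by simp
    then show ?thesis using Cons.IH[OF Cons.prems] nextpos_append[of l u v c p] by simp
  next
    case False
    then show ?thesis using xrun_Some_le[of u r l q] xrun_Some_le[of "u @ v" r l q] by blast
  qed
  then show ?case unfolding xrun_Cons_eq_Some_iff by (rule ex_cong1)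
qed simp

lemma xrun_reaches: "l \<le> length w \<Longrightarrow> \<exists>r. xrun w r 0 = Some l"
proof (induction l)
  case (Suc l)
  then obtain r where "xrun w r 0 = Some l" by auto
  moreover have "nextpos w (w ! l) l = Some (Suc l)"
    using Suc.prems by (auto simp: nextpos_eq_Some_iff)
  ultimately have "xrun w (r @ [w ! l]) 0 = Some (Suc l)" by (simp add: xrun_append_single)
  then show ?case ..
qed (use xrun.simps(1) in blast)

(* Unlike xattr, the empty ranker is admitted, so that the start position 0 has distance 0. *)
definition xdist :: "'a list \<Rightarrow> nat \<Rightarrow> nat" where
  "xdist w l = (LEAST n. \<exists>r. length r = n \<and> xrun w r 0 = Some l)"

lemma xattr_eq_xdist: "0 < l \<Longrightarrow> xattr w l = xdist w l"
proof -
  assume "0 < l"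
  then have "xranker_pos w r = Some l \<longleftrightarrow> xrun w r 0 = Some l" for r
    by (cases r) (auto simp: xranker_pos_def)
  then show ?thesis by (simp add: xattr_def xdist_def)
qed

lemma xdist_append:
  assumes "p \<le> length u"
  shows "xdist (u @ v) p = xdist u p"
  unfolding xdist_def by (simp only: xrun_append_Some_iff[OF assms])

lemma xdist_le_length: "xrun w r 0 = Some l \<Longrightarrow> xdist w l \<le> length r"
  unfolding xdist_def by (rule Least_le) blast

lemma xdist_attained:
  assumes "l \<le> length w"
  obtains r where "length r = xdist w l" "xrun w r 0 = Some l"
proof -
  obtain r where "xrun w r 0 = Some l" using xrun_reaches[OF assms] ..
  then have "\<exists>n r. length r = n \<and> xrun w r 0 = Some l" by blast
  from LeastI_ex[OF this] show ?thesis using that unfolding xdist_def by blast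
qed

lemma xdist_nextpos_le:
  assumes "nextpos w c p = Some l"
  shows "xdist w l \<le> Suc (xdist w p)"
proof -
  have "p \<le> length w" using assms by (simp add: nextpos_eq_Some_iff)
  then obtain r where r: "length r = xdist w p" "xrun w r 0 = Some p" by (rule xdist_attained)
  then have "xrun w (r @ [c]) 0 = Some l" using assms by (simp add: xrun_append_single)
  from xdist_le_length[OF this] show ?thesis using r by simp
qed

lemma xdist_optimal_nextpos:
  assumes "0 < l" "l \<le> length w"
  obtains c p where "nextpos w c p = Some l" "xdist w l = Suc (xdist w p)"
proof -
  obtain r where r: "length r = xdist w l" "xrun w r 0 = Some l"
    using assms(2) by (rule xdist_attained)
  have "r \<noteq> []" using r assms(1) by auto
  then obtain r' c where rc: "r = r' @ [c]" by (metis rev_exhaust)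
  with r(2) obtain p where p: "xrun w r' 0 = Some p" "nextpos w c p = Some l"
    by (auto simp: xrun_append_single split: option.splits)
  have "xdist w l \<le> Suc (xdist w p)" using p(2) by (rule xdist_nextpos_le)
  moreover have "xdist w p \<le> length r'" using p(1) by (rule xdist_le_length)
  ultimately show ?thesis using that p(2) r(1) rc by fastforce
qed

lemma xdist_le_by_simulation:
  assumes "0 < l" "l \<le> length w"
    and "\<And>c p. nextpos w c p = Some l \<Longrightarrow> xdist w l = Suc (xdist w p) \<Longrightarrow>
           \<exists>c' p'. nextpos w' c' p' = Some l' \<and> xdist w' p' \<le> xdist w p"
  shows "xdist w' l' \<le> xdist w l"
proof -
  obtain c p where p: "nextpos w c p = Some l" "xdist w l = Suc (xdist w p)"
    using assms(1,2) by (rule xdist_optimal_nextpos)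
  then obtain c' p' where "nextpos w' c' p' = Some l'" "xdist w' p' \<le> xdist w p"
    using assms(3) by blast
  then show ?thesis using p(2) xdist_nextpos_le[of w' c' p' l'] by simp
qed

lemma nextpos_transfer:
  assumes "nextpos w c p = Some l" "p' < l'" "l' \<le> length w'" "w' ! (l' - 1) = c"
    and "\<And>q. p' < q \<Longrightarrow> q < l' \<Longrightarrow> \<exists>q'. p < q' \<and> q' < l \<and> w' ! (q - 1) = w ! (q' - 1)"
  shows "nextpos w' c p' = Some l'"
proof -
  have gap: "w ! (q - 1) \<noteq> c" if "p < q" "q < l" for q
    using assms(1) that by (simp add: nextpos_eq_Some_iff)
  have "w' ! (q - 1) \<noteq> c" if "p' < q" "q < l'" for q
  proof -
    from assms(5)[OF that] obtain q' where "p < q'" "q' < l" "w' ! (q - 1) = w ! (q' - 1)"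
      by blast
    then show ?thesis using gap by simp
  qed
  then show ?thesis using assms(2-4) unfolding nextpos_eq_Some_iff by blast
qed

lemma nth_swap_adjacent:
  assumes "k \<noteq> length u" "k \<noteq> Suc (length u)"
  shows "(u @ a # b # v) ! k = (u @ b # a # v) ! k"
proof (cases "k < length u")
  case False
  with assms have "Suc (Suc (length u)) \<le> k" by simp
  then obtain j where "k = Suc (Suc (length u)) + j" using le_Suc_ex by blast
  then show ?thesis by (simp add: nth_append)
qed (simp add: nth_append)

lemma nextpos_swap_moved_left:
  assumes "nextpos (u @ [b, a] @ v) a p = Some (length u + 2)" "p \<le> length u"
  shows "nextpos (u @ [a, b] @ v) a p = Some (length u + 1)"
proof (rule nextpos_transfer[OF assms(1)])
  fix q assume "p < q" "q < length u + 1"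
  then show "\<exists>q'. p < q' \<and> q' < length u + 2 \<and>
      (u @ [a, b] @ v) ! (q - 1) = (u @ [b, a] @ v) ! (q' - 1)"
    by (intro exI[of _ q]) (simp add: nth_swap_adjacent)
qed (use assms in \<open>auto simp: nth_append\<close>)

lemma nextpos_swap_moved_right:
  assumes "nextpos (u @ [b, a] @ v) b p = Some (length u + 1)" "a \<noteq> b"
  shows "nextpos (u @ [a, b] @ v) b p = Some (length u + 2)"
proof -
  have "(u @ [a, b] @ v) ! (q - 1) \<noteq> b" if "p < q" "q < length u + 2" for q
  proof (cases "q = length u + 1")
    case True
    then show ?thesis using assms(2) by (simp add: nth_append)
  next
    case False
    then have "(u @ [a, b] @ v) ! (q - 1) = (u @ [b, a] @ v) ! (q - 1)"
      using that by (simp add: nth_swap_adjacent)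
    with False that show ?thesis using assms(1) by (simp add: nextpos_eq_Some_iff)
  qed
  then show ?thesis using assms(1) by (simp add: nextpos_eq_Some_iff nth_append)
qed

lemma nextpos_swap_beyond:
  assumes "nextpos (u @ [b, a] @ v) c p = Some l" "length u + 3 \<le> l" "p \<noteq> length u + 1"
  shows "nextpos (u @ [a, b] @ v) c p = Some l"
proof (rule nextpos_transfer[OF assms(1)])
  fix q assume q: "p < q" "q < l"
  consider "q = length u + 1" | "q = length u + 2"
    | "q - 1 \<noteq> length u" "q - 1 \<noteq> Suc (length u)"
    using q by linarith
  then show "\<exists>q'. p < q' \<and> q' < l \<and>
      (u @ [a, b] @ v) ! (q - 1) = (u @ [b, a] @ v) ! (q' - 1)"
  proof cases
    case 1
    then show ?thesis using q assms(2) by (intro exI[of _ "length u + 2"]) (simp add: nth_append)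
  next
    case 2
    then show ?thesis using q assms(2,3) by (intro exI[of _ "length u + 1"]) (simp add: nth_append)
  next
    case 3
    then show ?thesis using q by (intro exI[of _ q]) (simp add: nth_swap_adjacent)
  qed
qed (use assms in \<open>auto simp: nextpos_eq_Some_iff nth_swap_adjacent\<close>)

lemma nextpos_swap_from_between:
  assumes "nextpos (u @ [b, a] @ v) c (length u + 1) = Some l" "length u + 3 \<le> l"
  shows "nextpos (u @ [a, b] @ v) c (length u + 2) = Some l"
proof (rule nextpos_transfer[OF assms(1)])
  fix q assume "length u + 2 < q" "q < l"
  then show "\<exists>q'. length u + 1 < q' \<and> q' < l \<and>
      (u @ [a, b] @ v) ! (q - 1) = (u @ [b, a] @ v) ! (q' - 1)"
    by (intro exI[of _ q]) (simp add: nth_swap_adjacent)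
qed (use assms in \<open>auto simp: nextpos_eq_Some_iff nth_swap_adjacent\<close>)

lemma xdist_swap_prefix:
  "p \<le> length u \<Longrightarrow> xdist (u @ [a, b] @ v) p = xdist (u @ [b, a] @ v) p"
  by (simp add: xdist_append)

lemma xdist_swap_moved_left_le:
  assumes "xdist (u @ [b, a] @ v) (length u + 2) \<le> xdist (u @ [b, a] @ v) (length u + 1)"
  shows "xdist (u @ [a, b] @ v) (length u + 1) \<le> xdist (u @ [b, a] @ v) (length u + 2)"
proof (rule xdist_le_by_simulation)
  fix c p
  assume jump: "nextpos (u @ [b, a] @ v) c p = Some (length u + 2)"
    and opt: "xdist (u @ [b, a] @ v) (length u + 2) = Suc (xdist (u @ [b, a] @ v) p)"
  have "p \<noteq> length u + 1" using opt assms by auto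
  with jump have "p \<le> length u" "c = a" by (auto simp: nextpos_eq_Some_iff nth_append)
  then show "\<exists>c' p'. nextpos (u @ [a, b] @ v) c' p' = Some (length u + 1) \<and>
      xdist (u @ [a, b] @ v) p' \<le> xdist (u @ [b, a] @ v) p"
    using jump nextpos_swap_moved_left xdist_swap_prefix by (metis order.refl)
qed simp_all

lemma xdist_swap_moved_right_le:
  assumes "a \<noteq> b"
  shows "xdist (u @ [a, b] @ v) (length u + 2) \<le> xdist (u @ [b, a] @ v) (length u + 1)"
proof (rule xdist_le_by_simulation)
  fix c p
  assume jump: "nextpos (u @ [b, a] @ v) c p = Some (length u + 1)"
  then have "p \<le> length u" "c = b" by (auto simp: nextpos_eq_Some_iff nth_append)
  then show "\<exists>c' p'. nextpos (u @ [a, b] @ v) c' p' = Some (length u + 2) \<and>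
      xdist (u @ [a, b] @ v) p' \<le> xdist (u @ [b, a] @ v) p"
    using jump assms nextpos_swap_moved_right xdist_swap_prefix by (metis order.refl)
qed simp_all

lemma xdist_swap_beyond_le:
  assumes "length u + 3 \<le> l" "l \<le> length (u @ [b, a] @ v)"
    and below: "\<And>p. p < l \<Longrightarrow> xdist (u @ [a, b] @ v) p \<le> xdist (u @ [b, a] @ v) p"
    and "xdist (u @ [b, a] @ v) (length u + 2) \<le> xdist (u @ [b, a] @ v) (length u + 1)"
  shows "xdist (u @ [a, b] @ v) l \<le> xdist (u @ [b, a] @ v) l"
proof (rule xdist_le_by_simulation)
  fix c p
  assume jump: "nextpos (u @ [b, a] @ v) c p = Some l"
  show "\<exists>c' p'. nextpos (u @ [a, b] @ v) c' p' = Some l \<and>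
      xdist (u @ [a, b] @ v) p' \<le> xdist (u @ [b, a] @ v) p"
  proof (cases "p = length u + 1")
    case True
    have "xdist (u @ [a, b] @ v) (length u + 2) \<le> xdist (u @ [b, a] @ v) p"
      using below[of "length u + 2"] assms(1,4) True by simp
    moreover have "nextpos (u @ [a, b] @ v) c (length u + 2) = Some l"
      using nextpos_swap_from_between[OF jump[unfolded True] assms(1)] .
    ultimately show ?thesis by blast
  next
    case False
    have "p < l" using jump by (simp add: nextpos_eq_Some_iff)
    then show ?thesis using nextpos_swap_beyond[OF jump assms(1) False] below by blast
  qed
qed (use assms in auto)

lemma xdist_swap_le:
  assumes "a \<noteq> b"
    and tie: "xdist (u @ [b, a] @ v) (length u + 1) = xdist (u @ [b, a] @ v) (length u + 2)"
    and "l \<le> length (u @ [b, a] @ v)"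
  shows "xdist (u @ [a, b] @ v) l \<le> xdist (u @ [b, a] @ v) l"
  using assms(3)
proof (induction l rule: less_induct)
  case (less l)
  consider "l \<le> length u" | "l = length u + 1" | "l = length u + 2" | "length u + 3 \<le> l"
    by linarith
  then show ?case
  proof cases
    case 1
    then show ?thesis by (rule eq_imp_le[OF xdist_swap_prefix])
  next
    case 2
    then show ?thesis using xdist_swap_moved_left_le[of u b a v] tie by simp
  next
    case 3
    then show ?thesis using xdist_swap_moved_right_le[OF assms(1), of u v] tie by simp
  next
    case 4
    show ?thesis
    proof (rule xdist_swap_beyond_le[OF 4 less.prems])
      show "xdist (u @ [a, b] @ v) p \<le> xdist (u @ [b, a] @ v) p" if "p < l" for p
        using less.IH that less.prems by simp
    qed (use tie in simp)
  qed
qed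

lemma xdist_swap_tie:
  assumes "a \<noteq> b"
    and tie: "xdist (u @ [b, a] @ v) (length u + 1) = xdist (u @ [b, a] @ v) (length u + 2)"
  shows "xdist (u @ [a, b] @ v) (length u + 1) = xdist (u @ [a, b] @ v) (length u + 2)"
proof -
  have "xdist (u @ [a, b] @ v) (length u + 1) \<le> xdist (u @ [b, a] @ v) (length u + 2)"
    using xdist_swap_moved_left_le[of u b a v] tie by simp
  moreover have "xdist (u @ [a, b] @ v) (length u + 2) \<le> xdist (u @ [b, a] @ v) (length u + 1)"
    using xdist_swap_moved_right_le[OF assms(1)] .
  moreover have "xdist (u @ [b, a] @ v) (length u + 2) \<le> xdist (u @ [a, b] @ v) (length u + 1)"
    using xdist_swap_moved_right_le[of b a u v] assms(1) by simp
  moreover have "xdist (u @ [a, b] @ v) (length u + 2) \<le> xdist (u @ [a, b] @ v) (length u + 1)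
      \<Longrightarrow> xdist (u @ [b, a] @ v) (length u + 1) \<le> xdist (u @ [a, b] @ v) (length u + 2)"
    using xdist_swap_moved_left_le[of u a b v] by simp
  ultimately show ?thesis using tie by linarith
qed

theorem lemma10:
  fixes u v :: "'a list" and a b :: 'a and i :: nat
  assumes "i = length (u @ [b])"
    and "fst (attr (u @ [b, a] @ v) i) = fst (attr (u @ [b, a] @ v) (i + 1))"
  shows "\<forall>l. 1 \<le> l \<and> l \<le> length (u @ [b, a] @ v) \<longrightarrow>
           fst (attr (u @ [a, b] @ v) l) = fst (attr (u @ [b, a] @ v) l)"
proof (cases "a = b")
  case False
  let ?w = "u @ [b, a] @ v" and ?w' = "u @ [a, b] @ v"
  have tie: "xdist ?w (length u + 1) = xdist ?w (length u + 2)"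
    using assms by (simp add: attr_def xattr_eq_xdist)
  have "xdist ?w' l = xdist ?w l" if "l \<le> length ?w" for l
  proof (rule antisym)
    show "xdist ?w' l \<le> xdist ?w l" using xdist_swap_le[OF False tie that] .
    show "xdist ?w l \<le> xdist ?w' l"
      using xdist_swap_le[of b a u v] False xdist_swap_tie[OF False tie] that by simp
  qed
  then show ?thesis by (simp add: attr_def xattr_eq_xdist)
qed simp

end
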